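(* There is a function $F:\mathbb{N}\to\mathbb{R}_{\ge0}$ such that the following holds. Let $G=(V,E,c_V^G,c_E^G)$ and $H=(V,E,c_V^H,c_E^H)$ be two capacitated graphs on the same $n$-vertex graph $(V,E)$ such that every vertex capacity and every edge capacity of $G$ differs from the corresponding capacity of $H$ by at most $\xi$. Let $\mu_G,\mu_H$ be the fractional matchings returned by Rising-Tide on $G$ and $H$. Then for every edge $e\in E$, $|\mu_G(e)-\mu_H(e)|\le F(n)\xi$.
   Context: Capacitated graphs have nonnegative vertex capacities $c_V$ and edge capacities $c_E$; edges may include self-loops, and in $\sum_j\mu(i,j)$ a self-loop at $i$ counts once. A feasible fractional matching $\mu:E\to\mathbb{R}_{\ge0}$ satisfies $\mu(e)\le c_E(e)$ and $\sum_j\mu(i,j)\le c_V(i)$. Vertex $i$ is saturated if $\sum_j\mu(i,j)=c_V(i)$; edge $e$ is saturated if $\mu(e)=c_E(e)$. Rising-Tide: set $E'=\{e\in E:c_E(e)>0\}$ and $\mu\equiv0$; while $E'\ne\emptyset$: choose the maximum $\delta\ge0$ such that $\mu+\delta\mathbf{1}_{E'}$ is feasible, set $\mu\gets\mu+\delta\mathbf{1}_{E'}$, and remove from $E'$ every edge $(i,j)$ such that $i$, $j$, or $(i,j)$ is saturated; return $\mu$. *)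

theory Defs
  imports Complex_Main "HOL-Library.While_Combinator"
begin

text \<open>A capacitated graph on vertex set V (vertices are natural numbers) with edge set E.
  Edges are unordered pairs {i,j} (i = j gives a self-loop {i}).\<close>

definition graph :: "nat set \<Rightarrow> nat set set \<Rightarrow> bool" where
  "graph V E \<longleftrightarrow> finite V \<and> (\<forall>e\<in>E. \<exists>i\<in>V. \<exists>j\<in>V. e = {i, j})"

text \<open>Load of vertex i: sum over edges incident to i; a self-loop {i} counts once.\<close>
definition load :: "nat set set \<Rightarrow> (nat set \<Rightarrow> real) \<Rightarrow> nat \<Rightarrow> real" where
  "load E \<mu> i = (\<Sum>e\<in>{e\<in>E. i \<in> e}. \<mu> e)"

definition feasible ::
  "nat set \<Rightarrow> nat set set \<Rightarrow> (nat \<Rightarrow> real) \<Rightarrow> (nat set \<Rightarrow> real) \<Rightarrow> (nat set \<Rightarrow> real) \<Rightarrow> bool" where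
  "feasible V E cV cE \<mu> \<longleftrightarrow>
     (\<forall>e\<in>E. 0 \<le> \<mu> e \<and> \<mu> e \<le> cE e) \<and> (\<forall>i\<in>V. load E \<mu> i \<le> cV i)"

definition vertex_saturated :: "nat set set \<Rightarrow> (nat \<Rightarrow> real) \<Rightarrow> (nat set \<Rightarrow> real) \<Rightarrow> nat \<Rightarrow> bool" where
  "vertex_saturated E cV \<mu> i \<longleftrightarrow> load E \<mu> i = cV i"

definition edge_saturated :: "(nat set \<Rightarrow> real) \<Rightarrow> (nat set \<Rightarrow> real) \<Rightarrow> nat set \<Rightarrow> bool" where
  "edge_saturated cE \<mu> e \<longleftrightarrow> \<mu> e = cE e"

definition rt_step ::
  "nat set \<Rightarrow> nat set set \<Rightarrow> (nat \<Rightarrow> real) \<Rightarrow> (nat set \<Rightarrow> real)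
   \<Rightarrow> nat set set \<times> (nat set \<Rightarrow> real) \<Rightarrow> nat set set \<times> (nat set \<Rightarrow> real)" where
  "rt_step V E cV cE st =
     (let E' = fst st; \<mu> = snd st;
          \<delta> = (GREATEST d::real. 0 \<le> d \<and>
                  feasible V E cV cE (\<lambda>e. \<mu> e + (if e \<in> E' then d else 0)));
          \<mu>' = (\<lambda>e. \<mu> e + (if e \<in> E' then \<delta> else 0))
      in ({e \<in> E'. \<not> (\<exists>i\<in>e. vertex_saturated E cV \<mu>' i) \<and> \<not> edge_saturated cE \<mu>' e}, \<mu>'))"

definition rising_tide ::
  "nat set \<Rightarrow> nat set set \<Rightarrow> (nat \<Rightarrow> real) \<Rightarrow> (nat set \<Rightarrow> real) \<Rightarrow> (nat set \<Rightarrow> real)" where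
  "rising_tide V E cV cE =
     snd (while (\<lambda>st. fst st \<noteq> {}) (rt_step V E cV cE) ({e \<in> E. 0 < cE e}, (\<lambda>_. 0)))"

end

(* Rising-Tide freezes an edge only when the edge itself or one of its endpoints i becomes
   saturated; since all active edges share the current level, the edge is then a heaviest edge
   at i. Call such edges blocked: the output is feasible and every edge is blocked.

   Two feasible, everywhere blocked matchings muG, muH with capacities xi apart are compared by
   induction on the number of edges f with min (muG f) (muH f) < min (muG e) (muH e).
   Say muG e <= muH e. If e is saturated in G, then muH e <= cEH e <= muG e + xi. Otherwise e is
   heaviest at a G-saturated vertex i, and every other edge f at i is either lower (so it moves by
   at most K xi by induction) or has muH f >= muG e >= muG f; comparing the loads at i gives
   muH e - muG e <= (1 + |E| K) xi. Iterating yields the factor (|E|+1)^|E| <= (2^n+1)^(2^n). *)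
theory Submission
  imports Defs
begin

definition raise_on :: "nat set set \<Rightarrow> real \<Rightarrow> (nat set \<Rightarrow> real) \<Rightarrow> nat set \<Rightarrow> real" where
  "raise_on E' d \<mu> = (\<lambda>e. \<mu> e + (if e \<in> E' then d else 0))"

definition headroom ::
  "nat set \<Rightarrow> nat set set \<Rightarrow> (nat \<Rightarrow> real) \<Rightarrow> (nat set \<Rightarrow> real) \<Rightarrow> nat set set \<Rightarrow> (nat set \<Rightarrow> real) \<Rightarrow> real"
where
  "headroom V E cV cE E' \<mu> = Min ((\<lambda>e. cE e - \<mu> e) ` E' \<union>
     (\<lambda>i. (cV i - load E \<mu> i) / card {f\<in>E'. i \<in> f}) ` {i\<in>V. 0 < card {f\<in>E'. i \<in> f}})"

definition blocked :: "nat set set \<Rightarrow> (nat \<Rightarrow> real) \<Rightarrow> (nat set \<Rightarrow> real) \<Rightarrow> (nat set \<Rightarrow> real) \<Rightarrow> nat set \<Rightarrow> bool"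
where
  "blocked E cV cE \<mu> e \<longleftrightarrow> edge_saturated cE \<mu> e \<or>
     (\<exists>i\<in>e. vertex_saturated E cV \<mu> i \<and> (\<forall>f\<in>E. i \<in> f \<longrightarrow> \<mu> f \<le> \<mu> e))"

definition tide_invariant ::
  "nat set \<Rightarrow> nat set set \<Rightarrow> (nat \<Rightarrow> real) \<Rightarrow> (nat set \<Rightarrow> real) \<Rightarrow> nat set set \<times> (nat set \<Rightarrow> real) \<Rightarrow> bool"
where
  "tide_invariant V E cV cE st \<longleftrightarrow> (case st of (E', \<mu>) \<Rightarrow>
     E' \<subseteq> E \<and> feasible V E cV cE \<mu> \<and> (\<exists>L\<ge>0. (\<forall>e\<in>E'. \<mu> e = L) \<and> (\<forall>e\<in>E. \<mu> e \<le> L)) \<and>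
     (\<forall>e\<in>E - E'. blocked E cV cE \<mu> e))"

lemma graph_edges_Pow: "graph V E \<Longrightarrow> E \<subseteq> Pow V"
  unfolding graph_def by auto

lemma load_raise_on:
  assumes "finite E" "E' \<subseteq> E"
  shows "load E (raise_on E' d \<mu>) i = load E \<mu> i + d * card {f\<in>E'. i \<in> f}"
proof -
  have "{e\<in>{e\<in>E. i \<in> e}. e \<in> E'} = {f\<in>E'. i \<in> f}"
    using assms(2) by blast
  then have "(\<Sum>e\<in>{e\<in>E. i \<in> e}. if e \<in> E' then d else 0) = (\<Sum>e\<in>{f\<in>E'. i \<in> f}. d)"
    using assms(1) by (simp add: sum.inter_filter[symmetric])
  then show ?thesis
    unfolding load_def raise_on_def by (simp add: sum.distrib mult.commute)
qed

lemma le_headroom_iff: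
  assumes "finite V" "finite E'" "E' \<noteq> {}"
  shows "d \<le> headroom V E cV cE E' \<mu> \<longleftrightarrow> (\<forall>e\<in>E'. d \<le> cE e - \<mu> e) \<and>
    (\<forall>i\<in>V. 0 < card {f\<in>E'. i \<in> f} \<longrightarrow> d \<le> (cV i - load E \<mu> i) / card {f\<in>E'. i \<in> f})"
  using assms unfolding headroom_def by (subst Min_ge_iff) auto

lemma feasible_raise_on_iff:
  assumes V: "finite V" and E: "finite E" "E' \<subseteq> E" "E' \<noteq> {}"
    and feas: "feasible V E cV cE \<mu>" and d: "0 \<le> d"
  shows "feasible V E cV cE (raise_on E' d \<mu>) \<longleftrightarrow> d \<le> headroom V E cV cE E' \<mu>"
proof -
  have edges: "(\<forall>e\<in>E. 0 \<le> raise_on E' d \<mu> e \<and> raise_on E' d \<mu> e \<le> cE e) \<longleftrightarrow>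
      (\<forall>e\<in>E'. d \<le> cE e - \<mu> e)"
    using feas d E(2) unfolding feasible_def raise_on_def by (auto 4 3)
  have vertex: "load E (raise_on E' d \<mu>) i \<le> cV i \<longleftrightarrow>
      (0 < card {f\<in>E'. i \<in> f} \<longrightarrow> d \<le> (cV i - load E \<mu> i) / card {f\<in>E'. i \<in> f})"
    if "i \<in> V" for i
    using feas that unfolding load_raise_on[OF E(1,2)] feasible_def
    by (cases "card {f\<in>E'. i \<in> f} = 0") (auto simp: pos_le_divide_eq)
  show ?thesis
    unfolding le_headroom_iff[OF V finite_subset[OF E(2,1)] E(3)]
    using edges vertex by (auto simp: feasible_def)
qed

lemma headroom_nonneg:
  assumes "finite V" "finite E" "E' \<subseteq> E" "E' \<noteq> {}" "feasible V E cV cE \<mu>"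
  shows "0 \<le> headroom V E cV cE E' \<mu>"
  using feasible_raise_on_iff[OF assms order_refl] assms(5)
  by (simp add: raise_on_def)

lemma rt_step_headroom:
  assumes "finite V" "finite E" "E' \<subseteq> E" "E' \<noteq> {}" "feasible V E cV cE \<mu>"
  defines "\<mu>' \<equiv> raise_on E' (headroom V E cV cE E' \<mu>) \<mu>"
  shows "rt_step V E cV cE (E', \<mu>) =
    ({e\<in>E'. \<not> (\<exists>i\<in>e. vertex_saturated E cV \<mu>' i) \<and> \<not> edge_saturated cE \<mu>' e}, \<mu>')"
proof -
  have "(GREATEST d. 0 \<le> d \<and> feasible V E cV cE (raise_on E' d \<mu>)) = headroom V E cV cE E' \<mu>"
    using feasible_raise_on_iff[OF assms(1-5)] headroom_nonneg[OF assms(1-5)]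
    by (intro Greatest_equality) auto
  then show ?thesis
    unfolding rt_step_def Let_def fst_conv snd_conv raise_on_def[symmetric] \<mu>'_def by simp
qed

lemma headroom_attained:
  fixes V :: "nat set" and E :: "nat set set" and cV :: "nat \<Rightarrow> real" and cE \<mu> :: "nat set \<Rightarrow> real"
  assumes "finite V" "finite E" "E' \<subseteq> E" "E' \<noteq> {}"
  defines "\<mu>' \<equiv> raise_on E' (headroom V E cV cE E' \<mu>) \<mu>"
  shows "\<exists>e\<in>E'. edge_saturated cE \<mu>' e \<or> (\<exists>i\<in>e. vertex_saturated E cV \<mu>' i)"
proof -
  let ?k = "\<lambda>i. card {f\<in>E'. i \<in> f}"
  have "headroom V E cV cE E' \<mu> \<in> (\<lambda>e. cE e - \<mu> e) ` E' \<union>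
     (\<lambda>i. (cV i - load E \<mu> i) / ?k i) ` {i\<in>V. 0 < ?k i}"
    unfolding headroom_def using assms finite_subset by (intro Min_in) auto
  then consider (edge) e where "e \<in> E'" "headroom V E cV cE E' \<mu> = cE e - \<mu> e"
    | (vertex) i where "0 < ?k i" "headroom V E cV cE E' \<mu> = (cV i - load E \<mu> i) / ?k i"
    by auto
  then show ?thesis
  proof cases
    case edge
    then have "edge_saturated cE \<mu>' e" unfolding edge_saturated_def \<mu>'_def raise_on_def by simp
    then show ?thesis using edge(1) by blast
  next
    case vertex
    then obtain f where "f \<in> E'" "i \<in> f"
      by (metis (no_types, lifting) card.empty empty_Collect_eq less_irrefl)
    moreover have "vertex_saturated E cV \<mu>' i"
      using vertex unfolding vertex_saturated_def \<mu>'_def load_raise_on[OF assms(2,3)] by simp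
    ultimately show ?thesis by blast
  qed
qed

lemma blocked_raise_on:
  assumes E: "finite E" "E' \<subseteq> E" and e: "e \<in> E" "e \<notin> E'" "e \<subseteq> V"
    and blk: "blocked E cV cE \<mu> e"
    and feas: "feasible V E cV cE (raise_on E' d \<mu>)" and d: "0 \<le> d"
  shows "blocked E cV cE (raise_on E' d \<mu>) e"
proof -
  have same_e: "raise_on E' d \<mu> e = \<mu> e" using e by (simp add: raise_on_def)
  consider (edge) "edge_saturated cE \<mu> e"
    | (vertex) i where "i \<in> e" "vertex_saturated E cV \<mu> i" "\<forall>f\<in>E. i \<in> f \<longrightarrow> \<mu> f \<le> \<mu> e"
    using blk unfolding blocked_def by blast
  then show ?thesis
  proof cases
    case edge
    then show ?thesis using same_e by (simp add: blocked_def edge_saturated_def)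
  next
    case vertex
    let ?k = "card {f\<in>E'. i \<in> f}"
    have "load E (raise_on E' d \<mu>) i \<le> cV i"
      using feas vertex(1) e(3) unfolding feasible_def by blast
    then have "d * ?k \<le> 0"
      using vertex(2) unfolding load_raise_on[OF E] vertex_saturated_def by simp
    then have "d * ?k = 0"
      using d by (auto simp: mult_le_0_iff)
    then have "raise_on E' d \<mu> f = \<mu> f" if "i \<in> f" for f
      using that E finite_subset by (fastforce simp: raise_on_def)
    moreover have "vertex_saturated E cV (raise_on E' d \<mu>) i"
      using vertex(2) \<open>d * ?k = 0\<close> unfolding vertex_saturated_def load_raise_on[OF E] by simp
    ultimately show ?thesis
      using vertex(1,3) same_e unfolding blocked_def by auto
  qed
qed

lemma tide_invariant_step:
  assumes V: "finite V" "\<forall>e\<in>E. e \<subseteq> V" and E: "finite E"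
    and inv: "tide_invariant V E cV cE (E', \<mu>)" and ne: "E' \<noteq> {}"
  shows "tide_invariant V E cV cE (rt_step V E cV cE (E', \<mu>)) \<and> fst (rt_step V E cV cE (E', \<mu>)) \<subset> E'"
proof -
  have E': "E' \<subseteq> E" and feas: "feasible V E cV cE \<mu>"
    and old: "\<forall>e\<in>E - E'. blocked E cV cE \<mu> e"
    using inv unfolding tide_invariant_def by auto
  obtain L where L: "0 \<le> L" "\<forall>e\<in>E'. \<mu> e = L" "\<forall>e\<in>E. \<mu> e \<le> L"
    using inv unfolding tide_invariant_def by auto
  define h where "h = headroom V E cV cE E' \<mu>"
  define \<mu>' where "\<mu>' = raise_on E' h \<mu>"
  define E'' where "E'' = {e\<in>E'. \<not> (\<exists>i\<in>e. vertex_saturated E cV \<mu>' i) \<and> \<not> edge_saturated cE \<mu>' e}"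
  have step: "rt_step V E cV cE (E', \<mu>) = (E'', \<mu>')"
    unfolding E''_def \<mu>'_def h_def using rt_step_headroom[OF V(1) E E' ne feas] .
  have h: "0 \<le> h" unfolding h_def using headroom_nonneg[OF V(1) E E' ne feas] .
  have feas': "feasible V E cV cE \<mu>'"
    unfolding \<mu>'_def using feasible_raise_on_iff[OF V(1) E E' ne feas h] by (simp add: h_def)
  have top: "\<forall>e\<in>E'. \<mu>' e = L + h" and below: "\<forall>e\<in>E. \<mu>' e \<le> L + h"
    using L h unfolding \<mu>'_def raise_on_def by auto
  have "blocked E cV cE \<mu>' e" if e: "e \<in> E - E''" for e
  proof (cases "e \<in> E'")
    case True
    then have "edge_saturated cE \<mu>' e \<or> (\<exists>i\<in>e. vertex_saturated E cV \<mu>' i)"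
      using e unfolding E''_def by blast
    then show ?thesis
      using top below True unfolding blocked_def by fastforce
  next
    case False
    then show ?thesis
      unfolding \<mu>'_def using blocked_raise_on[OF E E'] e old V(2) feas'[unfolded \<mu>'_def] h by blast
  qed
  moreover have "E'' \<subset> E'"
    using headroom_attained[OF V(1) E E' ne] unfolding E''_def \<mu>'_def h_def by blast
  ultimately show ?thesis
    unfolding step tide_invariant_def using E' feas' top below L(1) h
    by (auto intro!: exI[of _ "L + h"])
qed

lemma rising_tide_blocked:
  assumes g: "graph V E" and "\<forall>i\<in>V. 0 \<le> cV i" "\<forall>e\<in>E. 0 \<le> cE e"
  shows "feasible V E cV cE (rising_tide V E cV cE) \<and> (\<forall>e\<in>E. blocked E cV cE (rising_tide V E cV cE) e)"
proof -
  have V: "finite V" "\<forall>e\<in>E. e \<subseteq> V" using g graph_edges_Pow by (auto simp: graph_def)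
  then have E: "finite E" using graph_edges_Pow[OF g] finite_subset by blast
  let ?run = "while (\<lambda>st. fst st \<noteq> {}) (rt_step V E cV cE) ({e \<in> E. 0 < cE e}, (\<lambda>_. 0))"
  have "tide_invariant V E cV cE ?run \<and> fst ?run = {}"
  proof (rule while_rule2[where r = "measure (\<lambda>st. card (fst st))"])
    show "tide_invariant V E cV cE ({e \<in> E. 0 < cE e}, (\<lambda>_. 0))"
      using assms(2,3) unfolding tide_invariant_def feasible_def load_def blocked_def edge_saturated_def
      by force
  next
    fix st assume inv: "tide_invariant V E cV cE st" and ne: "fst st \<noteq> {}"
    obtain E' \<mu> where st: "st = (E', \<mu>)" by fastforce
    have "finite E'" using inv E finite_subset unfolding st tide_invariant_def by auto
    then show "tide_invariant V E cV cE (rt_step V E cV cE st) \<and>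
        (rt_step V E cV cE st, st) \<in> measure (\<lambda>st. card (fst st))"
      using tide_invariant_step[OF V E, of cV cE E' \<mu>] inv ne unfolding st
      by (auto intro: psubset_card_mono)
  qed auto
  then show ?thesis
    unfolding rising_tide_def tide_invariant_def by (auto split: prod.splits)
qed

lemma blocked_excess_le:
  fixes \<mu>1 \<mu>2 :: "nat set \<Rightarrow> real" and K \<xi> :: real
  assumes E: "finite E" "\<forall>f\<in>E. f \<subseteq> V" and e: "e \<in> E"
    and blk: "blocked E c1V c1E \<mu>1 e" and feas: "feasible V E c2V c2E \<mu>2"
    and capV: "\<forall>i\<in>V. c2V i \<le> c1V i + \<xi>" and capE: "\<forall>f\<in>E. c2E f \<le> c1E f + \<xi>"
    and lower: "\<forall>f\<in>E. min (\<mu>1 f) (\<mu>2 f) < \<mu>1 e \<longrightarrow> \<bar>\<mu>1 f - \<mu>2 f\<bar> \<le> K * \<xi>"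
    and K: "0 \<le> K" and \<xi>: "0 \<le> \<xi>"
  shows "\<mu>2 e - \<mu>1 e \<le> (1 + card E * K) * \<xi>"
proof -
  have "0 \<le> card E * K * \<xi>" using K \<xi> by simp
  consider (edge) "edge_saturated c1E \<mu>1 e"
    | (vertex) i where "i \<in> e" "vertex_saturated E c1V \<mu>1 i" "\<forall>f\<in>E. i \<in> f \<longrightarrow> \<mu>1 f \<le> \<mu>1 e"
    using blk unfolding blocked_def by blast
  then show ?thesis
  proof cases
    case edge
    then show ?thesis
      using feas capE e \<open>0 \<le> card E * K * \<xi>\<close>
      unfolding feasible_def edge_saturated_def by (force simp: algebra_simps)
  next
    case vertex
    define S where "S = {f\<in>E. i \<in> f} - {e}"
    have load: "load E \<mu> i = \<mu> e + sum \<mu> S" for \<mu> :: "nat set \<Rightarrow> real"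
      using E(1) e vertex(1) unfolding load_def S_def by (simp add: sum.remove)
    have "\<mu>1 f - K * \<xi> \<le> \<mu>2 f" if f: "f \<in> S" for f
    proof (cases "min (\<mu>1 f) (\<mu>2 f) < \<mu>1 e")
      case True
      then show ?thesis using lower f unfolding S_def by (force simp: abs_le_iff)
    next
      case False
      then have "\<mu>1 e \<le> \<mu>2 f" by (simp add: not_less)
      moreover have "\<mu>1 f \<le> \<mu>1 e" using vertex(3) f unfolding S_def by blast
      ultimately show ?thesis using mult_nonneg_nonneg[OF K \<xi>] by linarith
    qed
    then have "sum \<mu>1 S - card S * (K * \<xi>) \<le> sum \<mu>2 S"
      using sum_mono[of S "\<lambda>f. \<mu>1 f - K * \<xi>"] by (simp add: sum_subtractf)
    moreover have "card S * (K * \<xi>) \<le> card E * (K * \<xi>)"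
      using E(1) K \<xi> unfolding S_def by (intro mult_right_mono) (auto intro: card_mono)
    moreover have "load E \<mu>2 i \<le> c1V i + \<xi>"
      using feas capV vertex(1) e E(2) unfolding feasible_def by force
    ultimately show ?thesis
      using vertex(2) load[of \<mu>1] load[of \<mu>2]
      unfolding vertex_saturated_def by (simp add: algebra_simps)
  qed
qed

lemma blocked_pair_gap:
  fixes K \<xi> :: real
  assumes E: "finite E" "\<forall>f\<in>E. f \<subseteq> V" and e: "e \<in> E"
    and G: "feasible V E cVG cEG \<mu>G" "blocked E cVG cEG \<mu>G e"
    and H: "feasible V E cVH cEH \<mu>H" "blocked E cVH cEH \<mu>H e"
    and capV: "\<forall>i\<in>V. \<bar>cVG i - cVH i\<bar> \<le> \<xi>" and capE: "\<forall>f\<in>E. \<bar>cEG f - cEH f\<bar> \<le> \<xi>"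
    and lower: "\<forall>f\<in>E. min (\<mu>G f) (\<mu>H f) < min (\<mu>G e) (\<mu>H e) \<longrightarrow> \<bar>\<mu>G f - \<mu>H f\<bar> \<le> K * \<xi>"
    and K: "0 \<le> K" "0 \<le> \<xi>"
  shows "\<bar>\<mu>G e - \<mu>H e\<bar> \<le> (1 + card E * K) * \<xi>"
proof (cases "\<mu>G e \<le> \<mu>H e")
  case True
  have "\<mu>H e - \<mu>G e \<le> (1 + card E * K) * \<xi>"
    by (rule blocked_excess_le[OF E e G(2) H(1) _ _ _ K])
      (use capV capE lower True in \<open>auto simp: abs_le_iff min_def\<close>)
  then show ?thesis using True by simp
next
  case False
  have "\<mu>G e - \<mu>H e \<le> (1 + card E * K) * \<xi>"
    by (rule blocked_excess_le[OF E e H(2) G(1) _ _ _ K])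
      (use capV capE lower False in \<open>auto simp: abs_le_iff min_def\<close>)
  then show ?thesis using False by simp
qed

lemma blocked_matchings_close:
  assumes E: "finite E" "\<forall>f\<in>E. f \<subseteq> V"
    and G: "feasible V E cVG cEG \<mu>G" "\<forall>f\<in>E. blocked E cVG cEG \<mu>G f"
    and H: "feasible V E cVH cEH \<mu>H" "\<forall>f\<in>E. blocked E cVH cEH \<mu>H f"
    and capV: "\<forall>i\<in>V. \<bar>cVG i - cVH i\<bar> \<le> \<xi>" and capE: "\<forall>f\<in>E. \<bar>cEG f - cEH f\<bar> \<le> \<xi>"
    and \<xi>: "0 \<le> \<xi>" and e: "e \<in> E"
  shows "\<bar>\<mu>G e - \<mu>H e\<bar> \<le> (real (card E) + 1) ^ card E * \<xi>"
proof -
  define B where "B = real (card E) + 1"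
  define m where "m f = min (\<mu>G f) (\<mu>H f)" for f
  define rank where "rank f = card {g\<in>E. m g < m f}" for f
  have B: "1 \<le> B" unfolding B_def by simp
  have gap: "\<bar>\<mu>G f - \<mu>H f\<bar> \<le> B ^ (rank f + 1) * \<xi>" if "f \<in> E" for f
    using that
  proof (induction "rank f" arbitrary: f rule: less_induct)
    case less
    have "\<bar>\<mu>G g - \<mu>H g\<bar> \<le> B ^ rank f * \<xi>"
      if g: "g \<in> E" "m g < m f" for g
    proof -
      have "{h\<in>E. m h < m g} \<subset> {h\<in>E. m h < m f}"
        using g by force
      then have "rank g < rank f"
        unfolding rank_def using E(1) by (simp add: psubset_card_mono)
      then have "\<bar>\<mu>G g - \<mu>H g\<bar> \<le> B ^ (rank g + 1) * \<xi>"
        using less.hyps g(1) by blast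
      also have "\<dots> \<le> B ^ rank f * \<xi>"
        using \<open>rank g < rank f\<close> B \<xi> by (intro mult_right_mono power_increasing) auto
      finally show ?thesis .
    qed
    then have "\<bar>\<mu>G f - \<mu>H f\<bar> \<le> (1 + card E * B ^ rank f) * \<xi>"
      using B \<xi> G H less.prems unfolding m_def
      by (intro blocked_pair_gap[OF E less.prems G(1) _ H(1) _ capV capE]) auto
    also have "\<dots> \<le> B ^ (rank f + 1) * \<xi>"
      using B \<xi> by (intro mult_right_mono) (auto simp: B_def algebra_simps)
    finally show ?case .
  qed
  have "rank e < card E"
    unfolding rank_def using E(1) e by (intro psubset_card_mono) auto
  then have "B ^ (rank e + 1) * \<xi> \<le> B ^ card E * \<xi>"
    using B \<xi> by (intro mult_right_mono power_increasing) auto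
  then show ?thesis
    using gap[OF e] unfolding B_def by linarith
qed

theorem lemma19:
  shows "\<exists>F :: nat \<Rightarrow> real. (\<forall>n. 0 \<le> F n) \<and>
    (\<forall>V E cVG cEG cVH cEH (\<xi>::real).
       graph V E \<longrightarrow>
       (\<forall>i\<in>V. 0 \<le> cVG i \<and> 0 \<le> cVH i) \<longrightarrow>
       (\<forall>e\<in>E. 0 \<le> cEG e \<and> 0 \<le> cEH e) \<longrightarrow>
       (\<forall>i\<in>V. \<bar>cVG i - cVH i\<bar> \<le> \<xi>) \<longrightarrow>
       (\<forall>e\<in>E. \<bar>cEG e - cEH e\<bar> \<le> \<xi>) \<longrightarrow>
       (\<forall>e\<in>E. \<bar>rising_tide V E cVG cEG e - rising_tide V E cVH cEH e\<bar> \<le> F (card V) * \<xi>))"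
proof (intro exI[of _ "\<lambda>n. (2 ^ n + 1) ^ 2 ^ n"] conjI allI impI ballI)
  fix V E cVG cEG cVH cEH e and \<xi> :: real
  assume g: "graph V E" and cV0: "\<forall>i\<in>V. 0 \<le> cVG i \<and> 0 \<le> cVH i"
    and cE0: "\<forall>e\<in>E. 0 \<le> cEG e \<and> 0 \<le> cEH e"
    and capV: "\<forall>i\<in>V. \<bar>cVG i - cVH i\<bar> \<le> \<xi>" and capE: "\<forall>e\<in>E. \<bar>cEG e - cEH e\<bar> \<le> \<xi>"
    and e: "e \<in> E"
  have V: "finite V" and EV: "\<forall>f\<in>E. f \<subseteq> V"
    using g graph_edges_Pow by (auto simp: graph_def)
  have E: "finite E" and cardE: "card E \<le> 2 ^ card V"
    using graph_edges_Pow[OF g] V by (auto intro: finite_subset simp: card_Pow[symmetric] card_mono)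
  have \<xi>: "0 \<le> \<xi>" using capE e by force
  have "\<bar>rising_tide V E cVG cEG e - rising_tide V E cVH cEH e\<bar> \<le> (real (card E) + 1) ^ card E * \<xi>"
    using rising_tide_blocked[OF g, of cVG cEG] rising_tide_blocked[OF g, of cVH cEH] cV0 cE0
    by (intro blocked_matchings_close[OF E EV _ _ _ _ capV capE \<xi> e]) auto
  also have "\<dots> \<le> (2 ^ card V + 1) ^ 2 ^ card V * \<xi>"
    using cardE \<xi> by (intro mult_right_mono order_trans[OF power_mono power_increasing]) auto
  finally show "\<bar>rising_tide V E cVG cEG e - rising_tide V E cVH cEH e\<bar> \<le> (2 ^ card V + 1) ^ 2 ^ card V * \<xi>" .
qed simp

end
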